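(* Let $f\colon\mathbb{R}\to[0,\infty)$ be measurable and such that $\|f\|_{U^1(\mathbb{R})}$ and $\|f\|_{U^3(\mathbb{R})}$ are non-zero and finite. Then $$\|f\|_{U^2(\mathbb{R})}<\|f\|_{U^1(\mathbb{R})}^{1/2}\|f\|_{U^3(\mathbb{R})}^{1/2}.$$
   Context: With Lebesgue measure on $\mathbb{R}$, for $d\ge1$, $\|f\|_{U^d(\mathbb{R})}:=\left(\int_{\mathbb{R}^{d+1}}\Delta_{h_1}\cdots\Delta_{h_d}f(x)\,dx\,dh_1\cdots dh_d\right)^{1/2^d}$, where $\Delta_hf(x):=f(x+h)f(x)$. *)

theory Defs
  imports "HOL-Analysis.Analysis"
begin

fun gowers_diff :: "(real \<Rightarrow> real) \<Rightarrow> real list \<Rightarrow> real \<Rightarrow> real" where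
  "gowers_diff f [] x = f x"
| "gowers_diff f (h # hs) x = gowers_diff f hs (x + h) * gowers_diff f hs x"

fun iter_int :: "nat \<Rightarrow> (real list \<Rightarrow> ennreal) \<Rightarrow> ennreal" where
  "iter_int 0 F = F []"
| "iter_int (Suc d) F = (\<integral>\<^sup>+ h. iter_int d (\<lambda>hs. F (h # hs)) \<partial>lebesgue)"

text \<open>The integral defining the 2^d-th power of the U^d norm (for nonnegative f).\<close>
definition gowers_int :: "(real \<Rightarrow> real) \<Rightarrow> nat \<Rightarrow> ennreal" where
  "gowers_int f d = (\<integral>\<^sup>+ x. iter_int d (\<lambda>hs. ennreal (gowers_diff f hs x)) \<partial>lebesgue)"

text \<open>The U^d norm (meaningful when gowers_int f d is finite).\<close>
definition gowers_norm :: "(real \<Rightarrow> real) \<Rightarrow> nat \<Rightarrow> real" where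
  "gowers_norm f d = enn2real (gowers_int f d) powr (1 / 2 ^ d)"

end

theory Submission
  imports Defs
begin

text \<open>Replace f by a nonnegative Borel function u that agrees with it almost everywhere. With
  M = \<integral>u, the autocorrelation \<phi>(a) = \<integral>u(y+a)u(y)dy and F(a,b) = \<integral>\<Delta>_a\<Delta>_b u, the three
  Gowers integrals are M^2, \<integral>\<phi>^2 and \<integral>\<integral>F^2. Writing \<integral>\<phi>^2 = \<integral>u(x)\<integral>u(x+a)\<phi>(a)da dx, three
  applications of Cauchy-Schwarz give (\<integral>\<phi>^2)^4 \<le> M^8 \<integral>\<integral>F^2, the last one being
  (\<integral>\<integral>F(a,b)\<phi>(a)\<phi>(b))^2 \<le> \<integral>\<integral>F^2 (\<integral>\<phi>^2)^2. Equality would force F(a,b) = c \<phi>(a)\<phi>(b).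
  Since \<integral>F(a,b)db = \<phi>(a)^2, \<phi> would then be a multiple of the indicator of a set S of finite
  positive measure, and since F(a,b) = 0 whenever \<phi>(a+b) = 0, S would be closed under addition up
  to null sets, which is impossible in \<real>. Finiteness of \<integral>\<phi>^2 follows from the non-strict
  inequality applied to truncations of u.\<close>

section \<open>Cauchy-Schwarz for nonnegative integrals\<close>

lemma Cauchy_Schwarz_nn_integral_weighted:
  assumes [measurable]: "w \<in> borel_measurable M" "f \<in> borel_measurable M" "g \<in> borel_measurable M"
  shows "(\<integral>\<^sup>+x. w x * f x * g x \<partial>M)\<^sup>2 \<le> (\<integral>\<^sup>+x. w x * f x ^ 2 \<partial>M) * (\<integral>\<^sup>+x. w x * g x ^ 2 \<partial>M)"
  using Cauchy_Schwarz_nn_integral[of f "density M w" g]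
  by (simp add: nn_integral_density mult.assoc)

lemma (in sigma_finite_measure) nn_integral_fst_curried:
  assumes [measurable]: "(\<lambda>p. f (fst p) (snd p)) \<in> borel_measurable (N \<Otimes>\<^sub>M M)"
  shows "(\<integral>\<^sup>+x. \<integral>\<^sup>+y. f x y \<partial>M \<partial>N) = (\<integral>\<^sup>+p. f (fst p) (snd p) \<partial>(N \<Otimes>\<^sub>M M))"
  by (subst nn_integral_fst[symmetric]) simp_all

lemma Cauchy_Schwarz_nn_integral_iterated:
  fixes w f g :: "'a \<Rightarrow> 'b \<Rightarrow> ennreal"
  assumes "sigma_finite_measure N"
    and [measurable]: "(\<lambda>p. w (fst p) (snd p)) \<in> borel_measurable (M \<Otimes>\<^sub>M N)"
      "(\<lambda>p. f (fst p) (snd p)) \<in> borel_measurable (M \<Otimes>\<^sub>M N)"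
      "(\<lambda>p. g (fst p) (snd p)) \<in> borel_measurable (M \<Otimes>\<^sub>M N)"
  shows "(\<integral>\<^sup>+x. \<integral>\<^sup>+y. w x y * f x y * g x y \<partial>N \<partial>M)\<^sup>2
    \<le> (\<integral>\<^sup>+x. \<integral>\<^sup>+y. w x y * f x y ^ 2 \<partial>N \<partial>M) * (\<integral>\<^sup>+x. \<integral>\<^sup>+y. w x y * g x y ^ 2 \<partial>N \<partial>M)"
proof -
  interpret N: sigma_finite_measure N by fact
  show ?thesis
    by (subst (1 2 3) N.nn_integral_fst_curried, measurable, rule Cauchy_Schwarz_nn_integral_weighted, measurable)
qed

lemma AE_eq_if_nn_integral_squares_eq_mult:
  assumes [measurable]: "f \<in> borel_measurable M" "g \<in> borel_measurable M"
    and f: "(\<integral>\<^sup>+x. f x ^ 2 \<partial>M) = A" and g: "(\<integral>\<^sup>+x. g x ^ 2 \<partial>M) = A"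
    and fg: "(\<integral>\<^sup>+x. f x * g x \<partial>M) = A" and A: "A \<noteq> \<infinity>"
  shows "AE x in M. f x = g x"
proof -
  define p where "p x = f x ^ 2 + g x ^ 2" for x
  define q where "q x = 2 * f x * g x" for x
  have [measurable]: "p \<in> borel_measurable M" "q \<in> borel_measurable M"
    unfolding p_def[abs_def] q_def[abs_def] by measurable
  have int_p: "(\<integral>\<^sup>+x. p x \<partial>M) = 2 * A"
    using f g by (simp add: p_def nn_integral_add mult_2)
  have int_q: "(\<integral>\<^sup>+x. q x \<partial>M) = 2 * A"
    using fg by (simp add: q_def nn_integral_cmult mult.assoc)
  have "(\<integral>\<^sup>+x. p x - q x \<partial>M) = (\<integral>\<^sup>+x. p x \<partial>M) - (\<integral>\<^sup>+x. q x \<partial>M)"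
    using int_q A by (intro nn_integral_diff) (auto simp: p_def q_def sum_of_squares_ge_ennreal ennreal_mult_eq_top_iff)
  also have "\<dots> = 0"
    using int_p int_q A by (simp add: diff_eq_0_iff_ennreal ennreal_mult_less_top less_top)
  finally have "AE x in M. p x - q x = 0"
    by (simp add: nn_integral_0_iff_AE)
  moreover have "AE x in M. p x \<noteq> \<infinity>"
    using int_p A by (intro nn_integral_PInf_AE) (auto simp: ennreal_mult_eq_top_iff)
  ultimately show ?thesis
  proof eventually_elim
    case (elim x)
    then obtain a b where a: "f x = ennreal a" "a \<ge> 0" and b: "g x = ennreal b" "b \<ge> 0"
      by (cases "f x"; cases "g x") (auto simp: p_def power_eq_top_ennreal_iff)
    have "ennreal (a\<^sup>2 + b\<^sup>2) \<le> ennreal (2 * a * b)"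
      using elim a b by (simp add: p_def q_def diff_eq_0_iff_ennreal ennreal_power ennreal_mult')
    then have "a\<^sup>2 + b\<^sup>2 \<le> 2 * a * b"
      using a b by (subst (asm) ennreal_le_iff) auto
    then have "(a - b)\<^sup>2 \<le> 0"
      by (simp add: power2_diff)
    then show ?case using a b by simp
  qed
qed

lemma Cauchy_Schwarz_nn_integral_eq_imp_AE_proportional:
  assumes [measurable]: "f \<in> borel_measurable M" "g \<in> borel_measurable M"
    and f: "(\<integral>\<^sup>+x. f x ^ 2 \<partial>M) \<notin> {0, \<infinity>}" and g: "(\<integral>\<^sup>+x. g x ^ 2 \<partial>M) \<notin> {0, \<infinity>}"
    and eq: "(\<integral>\<^sup>+x. f x * g x \<partial>M)\<^sup>2 = (\<integral>\<^sup>+x. f x ^ 2 \<partial>M) * (\<integral>\<^sup>+x. g x ^ 2 \<partial>M)"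
  shows "\<exists>c. c \<notin> {0, \<infinity>} \<and> (AE x in M. f x = c * g x)"
proof -
  have ennreal_sq: "\<exists>r>0. X = ennreal (r\<^sup>2)" if "X \<notin> {0, \<infinity>}" for X :: ennreal
  proof (cases X)
    case (real r)
    with that show ?thesis by (intro exI[of _ "sqrt r"]) auto
  qed (use that in simp)
  obtain a where a: "(\<integral>\<^sup>+x. f x ^ 2 \<partial>M) = ennreal (a\<^sup>2)" "a > 0"
    using ennreal_sq[OF f] by blast
  obtain b where b: "(\<integral>\<^sup>+x. g x ^ 2 \<partial>M) = ennreal (b\<^sup>2)" "b > 0"
    using ennreal_sq[OF g] by blast
  have "(\<integral>\<^sup>+x. f x * g x \<partial>M)\<^sup>2 = ennreal ((a * b)\<^sup>2)"
    using eq a b by (simp add: ennreal_mult power_mult_distrib)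
  then have fg: "(\<integral>\<^sup>+x. f x * g x \<partial>M) = ennreal (a * b)"
    using a b by (cases "\<integral>\<^sup>+x. f x * g x \<partial>M") (auto simp: ennreal_power)
  define c where "c = ennreal (a / b)"
  have "AE x in M. f x = c * g x"
  proof (rule AE_eq_if_nn_integral_squares_eq_mult)
    show "(\<integral>\<^sup>+x. (c * g x)\<^sup>2 \<partial>M) = ennreal (a\<^sup>2)"
      using a b by (simp add: c_def power_mult_distrib nn_integral_cmult ennreal_power ennreal_mult[symmetric]
          power_divide)
    have "(\<integral>\<^sup>+x. f x * (c * g x) \<partial>M) = c * (\<integral>\<^sup>+x. f x * g x \<partial>M)"
      by (subst nn_integral_cmult[symmetric]) (auto simp: ac_simps)
    also have "\<dots> = ennreal (a\<^sup>2)"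
      using fg a b by (simp add: c_def ennreal_mult[symmetric] power2_eq_square)
    finally show "(\<integral>\<^sup>+x. f x * (c * g x) \<partial>M) = ennreal (a\<^sup>2)" .
  qed (use a in simp_all)
  moreover have "c \<notin> {0, \<infinity>}"
    using a b by (simp add: c_def)
  ultimately show ?thesis by blast
qed

lemma Cauchy_Schwarz_nn_integral_iterated_eq_imp_AE_proportional:
  fixes f g :: "'a \<Rightarrow> 'b \<Rightarrow> ennreal"
  assumes "sigma_finite_measure M" "sigma_finite_measure N"
    and [measurable]: "(\<lambda>p. f (fst p) (snd p)) \<in> borel_measurable (M \<Otimes>\<^sub>M N)"
      "(\<lambda>p. g (fst p) (snd p)) \<in> borel_measurable (M \<Otimes>\<^sub>M N)"
    and f: "(\<integral>\<^sup>+x. \<integral>\<^sup>+y. f x y ^ 2 \<partial>N \<partial>M) \<notin> {0, \<infinity>}"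
    and g: "(\<integral>\<^sup>+x. \<integral>\<^sup>+y. g x y ^ 2 \<partial>N \<partial>M) \<notin> {0, \<infinity>}"
    and eq: "(\<integral>\<^sup>+x. \<integral>\<^sup>+y. f x y * g x y \<partial>N \<partial>M)\<^sup>2
      = (\<integral>\<^sup>+x. \<integral>\<^sup>+y. f x y ^ 2 \<partial>N \<partial>M) * (\<integral>\<^sup>+x. \<integral>\<^sup>+y. g x y ^ 2 \<partial>N \<partial>M)"
  shows "\<exists>c. c \<notin> {0, \<infinity>} \<and> (AE x in M. AE y in N. f x y = c * g x y)"
proof -
  interpret pair_sigma_finite M N
    using assms(1,2) by (simp add: pair_sigma_finite_def)
  obtain c where c: "c \<notin> {0, \<infinity>}" and "AE p in M \<Otimes>\<^sub>M N. f (fst p) (snd p) = c * g (fst p) (snd p)"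
    using Cauchy_Schwarz_nn_integral_eq_imp_AE_proportional[of "\<lambda>p. f (fst p) (snd p)" "M \<Otimes>\<^sub>M N"
        "\<lambda>p. g (fst p) (snd p)"] f g eq
    by (auto simp: M2.nn_integral_fst_curried)
  then have "AE x in M. AE y in N. f x y = c * g x y"
    by (auto dest: AE_pair)
  with c show ?thesis
    by blast
qed

lemma nn_integral_mult_iterated:
  assumes "f \<in> borel_measurable M" "g \<in> borel_measurable N"
  shows "(\<integral>\<^sup>+x. f x \<partial>M) * (\<integral>\<^sup>+y. g y \<partial>N) = (\<integral>\<^sup>+x. \<integral>\<^sup>+y. f x * g y \<partial>N \<partial>M)"
  using assms by (simp add: nn_integral_multc[symmetric] nn_integral_cmult)

lemma SUP_mult_incseq_ennreal:
  fixes f g :: "nat \<Rightarrow> ennreal"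
  assumes f: "incseq f" and g: "incseq g"
  shows "(SUP n. f n * g n) = (SUP n. f n) * (SUP n. g n)"
proof (rule antisym)
  show "(SUP n. f n * g n) \<le> (SUP n. f n) * (SUP n. g n)"
    by (intro SUP_least mult_mono SUP_upper) auto
  have "(SUP n. f n) * (SUP n. g n) = (SUP i. SUP j. f i * g j)"
    by (simp add: SUP_mult_left_ennreal SUP_mult_right_ennreal) (rule SUP_commute)
  also have "\<dots> \<le> (SUP n. f n * g n)"
  proof (intro SUP_least)
    fix i j
    have "f i * g j \<le> f (max i j) * g (max i j)"
      using f g by (intro mult_mono) (auto simp: incseq_def)
    also have "\<dots> \<le> (SUP n. f n * g n)"
      by (rule SUP_upper) simp
    finally show "f i * g j \<le> (SUP n. f n * g n)" .
  qed
  finally show "(SUP n. f n) * (SUP n. g n) \<le> (SUP n. f n * g n)" .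
qed

section \<open>Translation invariance and sets closed under addition\<close>

lemma nn_integral_lborel_translate:
  fixes g :: "real \<Rightarrow> ennreal"
  assumes "g \<in> borel_measurable borel"
  shows "(\<integral>\<^sup>+x. g (t + x) \<partial>lborel) = (\<integral>\<^sup>+x. g x \<partial>lborel)"
  using nn_integral_real_affine[OF assms, of 1 t] by simp

lemma emeasure_lborel_translate:
  fixes B :: "real set"
  assumes "B \<in> sets borel"
  shows "emeasure lborel {x. t + x \<in> B} = emeasure lborel B"
  using nn_integral_lborel_translate[of "indicator B" t] assms
  by (simp add: nn_integral_indicator[symmetric] indicator_def del: nn_integral_indicator)

lemma AE_lborel_translate:
  fixes P :: "real \<Rightarrow> bool"
  assumes "AE x in lborel. P x"
  shows "AE x in lborel. P (t + x)"
proof -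
  obtain N where N: "{x. \<not> P x} \<subseteq> N" "N \<in> null_sets lborel"
    using assms by (elim AE_E) (auto simp: null_sets_def)
  then have [measurable]: "N \<in> sets borel"
    by auto
  have "AE x in lborel. t + 1 * x \<notin> N"
    using N(2) by (intro AE_borel_affine AE_not_in) auto
  then show ?thesis
    by eventually_elim (use N(1) in auto)
qed

lemma (in sigma_finite_measure) emeasure_eq_0_if_AE_lower_part_null:
  fixes \<rho> :: "'a \<Rightarrow> real"
  assumes [measurable]: "P \<in> sets M" "\<rho> \<in> borel_measurable M"
    and null: "AE a in M. a \<in> P \<longrightarrow> emeasure M {x \<in> P. \<rho> x \<le> \<rho> a} = 0"
  shows "emeasure M P = 0"
proof -
  interpret pair_sigma_finite M M ..
  define K where "K a b = (indicator P a * indicator {x \<in> P. \<rho> x \<le> \<rho> a} b :: ennreal)" for a b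
  have [measurable]: "case_prod K \<in> borel_measurable (M \<Otimes>\<^sub>M M)"
    unfolding K_def by measurable
  have "(\<integral>\<^sup>+b. K a b \<partial>M) = indicator P a * emeasure M {x \<in> P. \<rho> x \<le> \<rho> a}" for a
    unfolding K_def by (subst nn_integral_cmult) auto
  with null have "AE a in M. (\<integral>\<^sup>+b. K a b \<partial>M) = 0"
    by (auto elim!: AE_mp split: split_indicator)
  then have K_null: "(\<integral>\<^sup>+a. \<integral>\<^sup>+b. K a b \<partial>M \<partial>M) = 0"
    by (simp add: nn_integral_cong_AE)
  have "emeasure M P * emeasure M P = (\<integral>\<^sup>+a. \<integral>\<^sup>+b. indicator P a * indicator P b \<partial>M \<partial>M)"
    by (simp add: nn_integral_cmult nn_integral_multc)
  also have "\<dots> \<le> (\<integral>\<^sup>+a. \<integral>\<^sup>+b. K a b + K b a \<partial>M \<partial>M)"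
    by (intro nn_integral_mono) (auto simp: K_def split: split_indicator)
  also have "\<dots> = (\<integral>\<^sup>+a. (\<integral>\<^sup>+b. K a b \<partial>M) + (\<integral>\<^sup>+b. K b a \<partial>M) \<partial>M)"
    by (intro nn_integral_cong nn_integral_add) measurable
  also have "\<dots> = (\<integral>\<^sup>+a. \<integral>\<^sup>+b. K a b \<partial>M \<partial>M) + (\<integral>\<^sup>+b. \<integral>\<^sup>+a. K b a \<partial>M \<partial>M)"
    by (subst Fubini'[of "\<lambda>a b. K b a"]) (measurable, rule nn_integral_add, measurable)
  also have "\<dots> = 0"
    using K_null by simp
  finally show ?thesis
    by simp
qed

lemma emeasure_halfline_AE_add_closed:
  fixes S :: "real set" and \<sigma> :: real
  assumes [measurable]: "S \<in> sets borel" and fin: "emeasure lborel S < \<infinity>"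
    and closed: "AE a in lborel. AE b in lborel. a \<in> S \<longrightarrow> b \<in> S \<longrightarrow> a + b \<in> S"
  shows "emeasure lborel (S \<inter> {x. 0 < \<sigma> * x}) = 0"
proof -
  define P where "P = S \<inter> {x. 0 < \<sigma> * x}"
  have [measurable]: "P \<in> sets borel"
    unfolding P_def by measurable
  have lower_null: "AE a in lborel. a \<in> P \<longrightarrow> emeasure lborel {x \<in> P. \<sigma> * x \<le> \<sigma> * a} = 0"
    using closed
  proof eventually_elim
    case (elim a)
    show ?case
    proof
      assume a: "a \<in> P"
      define Q where "Q = {x \<in> P. \<sigma> * a < \<sigma> * x}"
      define R where "R = {x \<in> P. \<sigma> * x \<le> \<sigma> * a}"
      have [measurable]: "Q \<in> sets borel" "R \<in> sets borel"
        unfolding Q_def R_def by measurable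
      have "AE b in lborel. b \<in> P \<longrightarrow> b \<in> {b. a + b \<in> Q}"
        using elim by eventually_elim (use a in \<open>auto simp: P_def Q_def algebra_simps\<close>)
      then have "emeasure lborel P \<le> emeasure lborel {b. a + b \<in> Q}"
        by (rule emeasure_mono_AE) measurable
      also have "\<dots> = emeasure lborel Q"
        by (rule emeasure_lborel_translate) measurable
      also have "emeasure lborel P = emeasure lborel Q + emeasure lborel R"
        by (subst plus_emeasure) (auto simp: Q_def R_def intro!: arg_cong[where f = "emeasure lborel"])
      finally have "emeasure lborel Q + emeasure lborel R \<le> emeasure lborel Q + 0"
        by simp
      moreover have "emeasure lborel Q \<noteq> \<infinity>"
        using fin emeasure_mono[of Q S lborel] by (auto simp: Q_def P_def top_unique)
      ultimately show "emeasure lborel R = 0"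
        by (simp add: ennreal_add_left_cancel_le)
    qed
  qed
  have "emeasure lborel P = 0"
    by (rule lborel.emeasure_eq_0_if_AE_lower_part_null[OF _ _ lower_null]) measurable
  then show ?thesis
    by (simp add: P_def)
qed

lemma emeasure_AE_add_closed_eq_0:
  fixes S :: "real set"
  assumes "S \<in> sets borel" "emeasure lborel S < \<infinity>"
    and "AE a in lborel. AE b in lborel. a \<in> S \<longrightarrow> b \<in> S \<longrightarrow> a + b \<in> S"
  shows "emeasure lborel S = 0"
proof -
  have "emeasure lborel (S \<inter> {x. 0 < x}) = 0" "emeasure lborel (S \<inter> {x. x < 0}) = 0"
    using emeasure_halfline_AE_add_closed[OF assms, of 1] emeasure_halfline_AE_add_closed[OF assms, of "-1"]
    by simp_all
  with assms(1) have "S \<inter> {x. 0 < x} \<union> S \<inter> {x. x < 0} \<union> {0} \<in> null_sets lborel"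
    by (intro null_sets.Un) (auto simp: null_sets_def)
  moreover have "S \<subseteq> S \<inter> {x. 0 < x} \<union> S \<inter> {x. x < 0} \<union> {0}"
    by auto
  ultimately have "S \<in> null_sets lborel"
    using assms(1) by (auto intro: null_sets_subset)
  then show ?thesis
    by auto
qed

section \<open>Autocorrelations\<close>

definition total_mass :: "(real \<Rightarrow> ennreal) \<Rightarrow> ennreal" where
  "total_mass u = (\<integral>\<^sup>+y. u y \<partial>lborel)"

definition autocorr :: "(real \<Rightarrow> ennreal) \<Rightarrow> real \<Rightarrow> ennreal" where
  "autocorr u a = (\<integral>\<^sup>+y. u (y + a) * u y \<partial>lborel)"

definition autocorr2 :: "(real \<Rightarrow> ennreal) \<Rightarrow> real \<Rightarrow> real \<Rightarrow> ennreal" where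
  "autocorr2 u a b = autocorr (\<lambda>x. u (x + a) * u x) b"

definition gowers2 :: "(real \<Rightarrow> ennreal) \<Rightarrow> ennreal" where
  "gowers2 u = (\<integral>\<^sup>+a. autocorr u a ^ 2 \<partial>lborel)"

definition gowers3 :: "(real \<Rightarrow> ennreal) \<Rightarrow> ennreal" where
  "gowers3 u = (\<integral>\<^sup>+a. \<integral>\<^sup>+b. autocorr2 u a b ^ 2 \<partial>lborel \<partial>lborel)"

definition autocorr_conv :: "(real \<Rightarrow> ennreal) \<Rightarrow> real \<Rightarrow> ennreal" where
  "autocorr_conv u x = (\<integral>\<^sup>+a. u (x + a) * autocorr u a \<partial>lborel)"

definition triple_corr :: "(real \<Rightarrow> ennreal) \<Rightarrow> real \<Rightarrow> real \<Rightarrow> ennreal" where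
  "triple_corr u a t = (\<integral>\<^sup>+x. u x * u (x + a) * u (x + t) \<partial>lborel)"

definition gowers_mixed :: "(real \<Rightarrow> ennreal) \<Rightarrow> ennreal" where
  "gowers_mixed u = (\<integral>\<^sup>+a. \<integral>\<^sup>+b. autocorr2 u a b * (autocorr u a * autocorr u b) \<partial>lborel \<partial>lborel)"

lemma measurable_autocorr[measurable]:
  assumes [measurable]: "u \<in> borel_measurable borel"
  shows "autocorr u \<in> borel_measurable borel"
  unfolding autocorr_def[abs_def] by measurable

lemma iterated_gowers1:
  assumes [measurable]: "u \<in> borel_measurable borel"
  shows "(\<integral>\<^sup>+x. \<integral>\<^sup>+a. u (x + a) * u x \<partial>lborel \<partial>lborel) = total_mass u ^ 2"
  by (simp add: nn_integral_multc nn_integral_cmult nn_integral_lborel_translate total_mass_def power2_eq_square)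

lemma nn_integral_autocorr:
  assumes [measurable]: "u \<in> borel_measurable borel"
  shows "(\<integral>\<^sup>+a. autocorr u a \<partial>lborel) = total_mass u ^ 2"
  unfolding autocorr_def iterated_gowers1[OF assms, symmetric]
  by (rule lborel_pair.Fubini') measurable

lemma nn_integral_autocorr2:
  assumes [measurable]: "u \<in> borel_measurable borel"
  shows "(\<integral>\<^sup>+b. autocorr2 u a b \<partial>lborel) = autocorr u a ^ 2"
  using nn_integral_autocorr[of "\<lambda>x. u (x + a) * u x"]
  by (simp add: autocorr2_def total_mass_def autocorr_def)

lemma autocorr2_eq_0_if_autocorr_eq_0:
  assumes [measurable]: "u \<in> borel_measurable borel" and "autocorr u (a + b) = 0"
  shows "autocorr2 u a b = 0"
proof -
  have "AE y in lborel. u (y + (a + b)) * u y = 0"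
    using assms(2) unfolding autocorr_def by (subst (asm) nn_integral_0_iff_AE) auto
  then have "AE y in lborel. u (y + b + a) * u (y + b) * (u (y + a) * u y) = 0"
    by eventually_elim (auto simp: ac_simps)
  then show ?thesis
    unfolding autocorr2_def autocorr_def by (subst nn_integral_0_iff_AE) auto
qed

lemma nn_integral_mult_autocorr:
  assumes [measurable]: "u \<in> borel_measurable borel"
  shows "(\<integral>\<^sup>+a. \<integral>\<^sup>+x. u (x + a) * u x * autocorr u a \<partial>lborel \<partial>lborel) = gowers2 u"
  by (simp add: nn_integral_multc gowers2_def autocorr_def power2_eq_square)

lemma iterated_gowers2:
  assumes [measurable]: "u \<in> borel_measurable borel"
  shows "(\<integral>\<^sup>+x. \<integral>\<^sup>+a. \<integral>\<^sup>+b. u (x + a + b) * u (x + a) * (u (x + b) * u x) \<partial>lborel \<partial>lborel \<partial>lborel)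
    = gowers2 u"
proof -
  have "(\<integral>\<^sup>+b. u (x + a + b) * u (x + a) * (u (x + b) * u x) \<partial>lborel) = u (x + a) * u x * autocorr u a"
    for x a
  proof -
    have "(\<integral>\<^sup>+b. u (x + a + b) * u (x + a) * (u (x + b) * u x) \<partial>lborel)
        = u (x + a) * u x * (\<integral>\<^sup>+b. u (x + b + a) * u (x + b) \<partial>lborel)"
      by (subst nn_integral_cmult[symmetric]) (auto intro!: nn_integral_cong simp: ac_simps)
    also have "\<dots> = u (x + a) * u x * autocorr u a"
      using nn_integral_lborel_translate[of "\<lambda>y. u (y + a) * u y" x] by (simp add: autocorr_def)
    finally show ?thesis .
  qed
  then have "(\<integral>\<^sup>+x. \<integral>\<^sup>+a. \<integral>\<^sup>+b. u (x + a + b) * u (x + a) * (u (x + b) * u x) \<partial>lborel \<partial>lborel \<partial>lborel)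
      = (\<integral>\<^sup>+x. \<integral>\<^sup>+a. u (x + a) * u x * autocorr u a \<partial>lborel \<partial>lborel)"
    by simp
  also have "\<dots> = gowers2 u"
    unfolding nn_integral_mult_autocorr[OF assms, symmetric] by (rule lborel_pair.Fubini') measurable
  finally show ?thesis .
qed

lemma nn_integral_cross_corr_sq:
  assumes [measurable]: "v \<in> borel_measurable borel" "w \<in> borel_measurable borel"
  shows "(\<integral>\<^sup>+t. (\<integral>\<^sup>+x. v x * w (x + t) \<partial>lborel) ^ 2 \<partial>lborel) = (\<integral>\<^sup>+b. autocorr v b * autocorr w b \<partial>lborel)"
proof -
  have "(\<integral>\<^sup>+t. (\<integral>\<^sup>+x. v x * w (x + t) \<partial>lborel) ^ 2 \<partial>lborel)
      = (\<integral>\<^sup>+t. \<integral>\<^sup>+x. \<integral>\<^sup>+z. v x * v z * (w (x + t) * w (z + t)) \<partial>lborel \<partial>lborel \<partial>lborel)"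
    by (simp add: power2_eq_square nn_integral_mult_iterated mult_ac)
  also have "\<dots> = (\<integral>\<^sup>+x. \<integral>\<^sup>+z. \<integral>\<^sup>+t. v x * v z * (w (x + t) * w (z + t)) \<partial>lborel \<partial>lborel \<partial>lborel)"
    by (subst lborel_pair.Fubini', measurable, intro nn_integral_cong lborel_pair.Fubini', measurable)
  also have "\<dots> = (\<integral>\<^sup>+x. \<integral>\<^sup>+z. v x * v z * autocorr w (z - x) \<partial>lborel \<partial>lborel)"
  proof (intro nn_integral_cong)
    fix x z
    have "(\<integral>\<^sup>+t. w (x + t) * w (z + t) \<partial>lborel) = autocorr w (z - x)"
      using nn_integral_lborel_translate[of "\<lambda>y. w (y + (z - x)) * w y" x] by (simp add: autocorr_def ac_simps)
    then show "(\<integral>\<^sup>+t. v x * v z * (w (x + t) * w (z + t)) \<partial>lborel) = v x * v z * autocorr w (z - x)"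
      by (simp add: nn_integral_cmult)
  qed
  also have "\<dots> = (\<integral>\<^sup>+x. \<integral>\<^sup>+b. v (x + b) * v x * autocorr w b \<partial>lborel \<partial>lborel)"
  proof (rule nn_integral_cong)
    fix x
    show "(\<integral>\<^sup>+z. v x * v z * autocorr w (z - x) \<partial>lborel) = (\<integral>\<^sup>+b. v (x + b) * v x * autocorr w b \<partial>lborel)"
      using nn_integral_lborel_translate[of "\<lambda>z. v x * v z * autocorr w (z - x)" x] by (simp add: ac_simps)
  qed
  also have "\<dots> = (\<integral>\<^sup>+b. autocorr v b * autocorr w b \<partial>lborel)"
    by (subst lborel_pair.Fubini', measurable) (simp add: autocorr_def nn_integral_multc)
  finally show ?thesis .
qed

context
  fixes u :: "real \<Rightarrow> ennreal"
  assumes u[measurable]: "u \<in> borel_measurable borel"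
begin

lemma measurable_autocorr2[measurable (raw)]:
  assumes "f \<in> borel_measurable M" "g \<in> borel_measurable M"
  shows "(\<lambda>x. autocorr2 u (f x) (g x)) \<in> borel_measurable M"
proof -
  have "(\<lambda>p. autocorr2 u (fst p) (snd p)) \<in> borel_measurable (borel \<Otimes>\<^sub>M borel)"
    unfolding autocorr2_def autocorr_def by measurable
  from measurable_compose[OF measurable_Pair[OF assms] this] show ?thesis
    by simp
qed

lemma measurable_triple_corr[measurable (raw)]:
  assumes "f \<in> borel_measurable M" "g \<in> borel_measurable M"
  shows "(\<lambda>x. triple_corr u (f x) (g x)) \<in> borel_measurable M"
proof -
  have "(\<lambda>p. triple_corr u (fst p) (snd p)) \<in> borel_measurable (borel \<Otimes>\<^sub>M borel)"
    unfolding triple_corr_def by measurable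
  from measurable_compose[OF measurable_Pair[OF assms] this] show ?thesis
    by simp
qed

lemma measurable_autocorr_conv[measurable]: "autocorr_conv u \<in> borel_measurable borel"
  unfolding autocorr_conv_def[abs_def] by measurable

lemma gowers2_eq_nn_integral_autocorr_conv: "gowers2 u = (\<integral>\<^sup>+x. u x * autocorr_conv u x \<partial>lborel)"
proof -
  have "gowers2 u = (\<integral>\<^sup>+x. \<integral>\<^sup>+a. u (x + a) * u x * autocorr u a \<partial>lborel \<partial>lborel)"
    unfolding nn_integral_mult_autocorr[OF u, symmetric] by (rule lborel_pair.Fubini'[symmetric]) measurable
  also have "\<dots> = (\<integral>\<^sup>+x. u x * autocorr_conv u x \<partial>lborel)"
    unfolding autocorr_conv_def
    by (subst nn_integral_cmult[symmetric]) (auto intro!: nn_integral_cong simp: ac_simps)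
  finally show ?thesis .
qed

lemma iterated_gowers3:
  "(\<integral>\<^sup>+x. \<integral>\<^sup>+a. \<integral>\<^sup>+b. \<integral>\<^sup>+c. u (x + a + b + c) * u (x + a + b) * (u (x + a + c) * u (x + a)) *
      (u (x + b + c) * u (x + b) * (u (x + c) * u x)) \<partial>lborel \<partial>lborel \<partial>lborel \<partial>lborel)
    = gowers3 u"
proof -
  have "(\<integral>\<^sup>+x. \<integral>\<^sup>+a. \<integral>\<^sup>+b. \<integral>\<^sup>+c. u (x + a + b + c) * u (x + a + b) * (u (x + a + c) * u (x + a)) *
      (u (x + b + c) * u (x + b) * (u (x + c) * u x)) \<partial>lborel \<partial>lborel \<partial>lborel \<partial>lborel)
    = (\<integral>\<^sup>+a. \<integral>\<^sup>+x. \<integral>\<^sup>+b. \<integral>\<^sup>+c. u (x + a + b + c) * u (x + a + b) * (u (x + a + c) * u (x + a)) *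
      (u (x + b + c) * u (x + b) * (u (x + c) * u x)) \<partial>lborel \<partial>lborel \<partial>lborel \<partial>lborel)"
    by (rule lborel_pair.Fubini'[symmetric]) measurable
  also have "\<dots> = (\<integral>\<^sup>+a. gowers2 (\<lambda>x. u (x + a) * u x) \<partial>lborel)"
    by (intro nn_integral_cong, subst iterated_gowers2[symmetric]) (simp_all add: ac_simps)
  also have "\<dots> = gowers3 u"
    by (simp add: gowers3_def gowers2_def autocorr2_def)
  finally show ?thesis .
qed

section \<open>The chain of Cauchy-Schwarz inequalities\<close>

lemma gowers2_sq_le: "gowers2 u ^ 2 \<le> total_mass u * (\<integral>\<^sup>+x. u x * autocorr_conv u x ^ 2 \<partial>lborel)"
  using Cauchy_Schwarz_nn_integral_weighted[of u lborel "\<lambda>_. 1" "autocorr_conv u"]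
  by (simp add: gowers2_eq_nn_integral_autocorr_conv total_mass_def)

lemma nn_integral_mult_autocorr_conv_sq:
  "(\<integral>\<^sup>+x. u x * autocorr_conv u x ^ 2 \<partial>lborel)
    = (\<integral>\<^sup>+a. \<integral>\<^sup>+t. autocorr u a * autocorr u t * triple_corr u a t \<partial>lborel \<partial>lborel)"
proof -
  have "u x * autocorr_conv u x ^ 2
      = (\<integral>\<^sup>+a. \<integral>\<^sup>+t. autocorr u a * autocorr u t * (u x * u (x + a) * u (x + t)) \<partial>lborel \<partial>lborel)" for x
  proof -
    have "u x * autocorr_conv u x ^ 2
        = u x * (\<integral>\<^sup>+a. \<integral>\<^sup>+t. (u (x + a) * autocorr u a) * (u (x + t) * autocorr u t) \<partial>lborel \<partial>lborel)"
      by (simp add: autocorr_conv_def power2_eq_square nn_integral_mult_iterated)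
    also have "\<dots> = (\<integral>\<^sup>+a. \<integral>\<^sup>+t. u x * ((u (x + a) * autocorr u a) * (u (x + t) * autocorr u t))
        \<partial>lborel \<partial>lborel)"
      by (simp flip: nn_integral_cmult)
    finally show ?thesis
      by (simp add: ac_simps)
  qed
  then have "(\<integral>\<^sup>+x. u x * autocorr_conv u x ^ 2 \<partial>lborel)
      = (\<integral>\<^sup>+x. \<integral>\<^sup>+a. \<integral>\<^sup>+t. autocorr u a * autocorr u t * (u x * u (x + a) * u (x + t))
          \<partial>lborel \<partial>lborel \<partial>lborel)"
    by simp
  also have "\<dots> = (\<integral>\<^sup>+a. \<integral>\<^sup>+t. \<integral>\<^sup>+x. autocorr u a * autocorr u t * (u x * u (x + a) * u (x + t))
      \<partial>lborel \<partial>lborel \<partial>lborel)"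
    by (subst lborel_pair.Fubini', measurable, intro nn_integral_cong lborel_pair.Fubini', measurable)
  also have "\<dots> = (\<integral>\<^sup>+a. \<integral>\<^sup>+t. autocorr u a * autocorr u t * triple_corr u a t \<partial>lborel \<partial>lborel)"
    by (simp add: triple_corr_def nn_integral_cmult)
  finally show ?thesis .
qed

lemma nn_integral_autocorr_triple_corr_sq_le:
  "(\<integral>\<^sup>+a. \<integral>\<^sup>+t. autocorr u a * autocorr u t * triple_corr u a t \<partial>lborel \<partial>lborel)\<^sup>2
    \<le> total_mass u ^ 2 * gowers2 u * (\<integral>\<^sup>+a. \<integral>\<^sup>+t. autocorr u a * triple_corr u a t ^ 2 \<partial>lborel \<partial>lborel)"
proof -
  have "(\<integral>\<^sup>+a. \<integral>\<^sup>+t. autocorr u a * autocorr u t ^ 2 \<partial>lborel \<partial>lborel) = total_mass u ^ 2 * gowers2 u"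
    by (simp add: nn_integral_mult_iterated[symmetric] nn_integral_autocorr gowers2_def)
  with Cauchy_Schwarz_nn_integral_iterated[of lborel "\<lambda>a t. autocorr u a" lborel
      "\<lambda>a t. autocorr u t" "\<lambda>a t. triple_corr u a t"]
  show ?thesis
    by (simp add: lborel.sigma_finite_measure_axioms)
qed

lemma nn_integral_autocorr_triple_corr_sq:
  "(\<integral>\<^sup>+a. \<integral>\<^sup>+t. autocorr u a * triple_corr u a t ^ 2 \<partial>lborel \<partial>lborel) = gowers_mixed u"
proof -
  have "(\<integral>\<^sup>+t. autocorr u a * triple_corr u a t ^ 2 \<partial>lborel)
      = (\<integral>\<^sup>+b. autocorr2 u a b * (autocorr u a * autocorr u b) \<partial>lborel)" for a
  proof -
    have "(\<integral>\<^sup>+t. autocorr u a * triple_corr u a t ^ 2 \<partial>lborel)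
        = autocorr u a * (\<integral>\<^sup>+t. triple_corr u a t ^ 2 \<partial>lborel)"
      by (simp add: nn_integral_cmult)
    also have "(\<integral>\<^sup>+t. triple_corr u a t ^ 2 \<partial>lborel) = (\<integral>\<^sup>+b. autocorr2 u a b * autocorr u b \<partial>lborel)"
      using nn_integral_cross_corr_sq[of "\<lambda>x. u (x + a) * u x" u]
      by (simp add: triple_corr_def autocorr2_def ac_simps)
    finally show ?thesis
      by (simp flip: nn_integral_cmult add: ac_simps)
  qed
  then show ?thesis
    by (simp add: gowers_mixed_def)
qed

lemma iterated_autocorr_product_sq:
  "(\<integral>\<^sup>+a. \<integral>\<^sup>+b. (autocorr u a * autocorr u b) ^ 2 \<partial>lborel \<partial>lborel) = gowers2 u ^ 2"
  by (simp add: power_mult_distrib nn_integral_mult_iterated[symmetric] gowers2_def) (simp add: power2_eq_square)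

lemma gowers_mixed_sq_le: "gowers_mixed u ^ 2 \<le> gowers3 u * gowers2 u ^ 2"
  using Cauchy_Schwarz_nn_integral_iterated[of lborel "\<lambda>a b. 1" lborel
      "\<lambda>a b. autocorr2 u a b" "\<lambda>a b. autocorr u a * autocorr u b"]
  by (simp add: lborel.sigma_finite_measure_axioms gowers_mixed_def gowers3_def iterated_autocorr_product_sq)

lemma gowers2_pow8_le: "gowers2 u ^ 8 \<le> total_mass u ^ 8 * gowers2 u ^ 2 * gowers_mixed u ^ 2"
proof -
  define X where "X = (\<integral>\<^sup>+x. u x * autocorr_conv u x ^ 2 \<partial>lborel)"
  have G2: "gowers2 u ^ 2 \<le> total_mass u * X"
    unfolding X_def by (rule gowers2_sq_le)
  have X: "X ^ 2 \<le> total_mass u ^ 2 * gowers2 u * gowers_mixed u"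
    using nn_integral_autocorr_triple_corr_sq_le
    unfolding X_def nn_integral_mult_autocorr_conv_sq nn_integral_autocorr_triple_corr_sq .
  have "gowers2 u ^ 8 = (gowers2 u ^ 2) ^ 4"
    by (simp flip: power_mult)
  also have "\<dots> \<le> (total_mass u * X) ^ 4"
    by (intro power_mono G2) simp
  also have "\<dots> = total_mass u ^ 4 * (X ^ 2) ^ 2"
    by (simp add: power_mult_distrib flip: power_mult)
  also have "\<dots> \<le> total_mass u ^ 4 * (total_mass u ^ 2 * gowers2 u * gowers_mixed u) ^ 2"
    by (intro mult_left_mono power_mono X) simp_all
  also have "\<dots> = total_mass u ^ 8 * gowers2 u ^ 2 * gowers_mixed u ^ 2"
    by (simp add: power_mult_distrib ac_simps flip: power_mult power_add)
  finally show ?thesis .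
qed

lemma gowers2_pow4_le:
  assumes "gowers2 u \<noteq> \<infinity>"
  shows "gowers2 u ^ 4 \<le> (total_mass u ^ 2) ^ 4 * gowers3 u"
proof (cases "gowers2 u = 0")
  case False
  have "gowers2 u ^ 4 * gowers2 u ^ 4 = gowers2 u ^ 8"
    by (simp flip: power_add)
  also have "\<dots> \<le> total_mass u ^ 8 * gowers2 u ^ 2 * (gowers3 u * gowers2 u ^ 2)"
    using gowers2_pow8_le by (rule order_trans) (intro mult_left_mono gowers_mixed_sq_le; simp)
  also have "\<dots> = gowers2 u ^ 4 * ((total_mass u ^ 2) ^ 4 * gowers3 u)"
    by (simp add: ac_simps flip: power_mult power_add)
  finally show ?thesis
    using False assms by (subst (asm) ennreal_mult_le_mult_iff) (auto simp: power_eq_top_ennreal)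
qed simp

lemma autocorr_AE_eq_indicator_if_AE_proportional:
  assumes M: "total_mass u \<noteq> \<infinity>"
    and prod: "AE a in lborel. AE b in lborel. autocorr2 u a b = c * (autocorr u a * autocorr u b)"
  shows "AE a in lborel. autocorr u a = c * total_mass u ^ 2 * indicator {a. autocorr u a \<noteq> 0} a"
proof -
  have "AE a in lborel. autocorr u a \<noteq> \<infinity>"
    using M by (intro nn_integral_PInf_AE) (auto simp: nn_integral_autocorr power_eq_top_ennreal)
  then show ?thesis
    using prod
  proof eventually_elim
    case (elim a)
    have "autocorr u a * autocorr u a = (\<integral>\<^sup>+b. (c * autocorr u a) * autocorr u b \<partial>lborel)"
      unfolding power2_eq_square[symmetric] nn_integral_autocorr2[OF u, symmetric]
      using elim(2) by (intro nn_integral_cong_AE) (auto simp: ac_simps)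
    also have "\<dots> = autocorr u a * (c * total_mass u ^ 2)"
      by (simp add: nn_integral_cmult nn_integral_autocorr) (simp add: ac_simps)
    finally show ?case
      using elim(1) by (cases "autocorr u a = 0") (auto simp: ennreal_mult_cancel_left)
  qed
qed

lemma autocorr2_not_AE_proportional_product:
  assumes M: "total_mass u \<notin> {0, \<infinity>}" and c: "c \<notin> {0, \<infinity>}"
    and prod: "AE a in lborel. AE b in lborel. autocorr2 u a b = c * (autocorr u a * autocorr u b)"
  shows False
proof -
  define \<kappa> where "\<kappa> = c * total_mass u ^ 2"
  have \<kappa>: "\<kappa> \<notin> {0, \<infinity>}"
    using c M by (auto simp: \<kappa>_def ennreal_mult_eq_top_iff power_eq_top_ennreal)
  define S where "S = {a. autocorr u a \<noteq> 0}"
  have [measurable]: "S \<in> sets borel"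
    unfolding S_def by measurable
  have indicator: "AE a in lborel. autocorr u a = \<kappa> * indicator S a"
    unfolding \<kappa>_def S_def using M prod by (intro autocorr_AE_eq_indicator_if_AE_proportional) auto
  have "total_mass u ^ 2 = (\<integral>\<^sup>+a. \<kappa> * indicator S a \<partial>lborel)"
    by (simp add: nn_integral_autocorr[symmetric] nn_integral_cong_AE[OF indicator])
  then have mass: "total_mass u ^ 2 = \<kappa> * emeasure lborel S"
    by (simp add: nn_integral_cmult)
  then have "emeasure lborel S < \<infinity>"
    using M \<kappa> by (cases "emeasure lborel S = \<infinity>") (auto simp: ennreal_mult_top power_eq_top_ennreal less_top)
  moreover have "AE a in lborel. AE b in lborel. a \<in> S \<longrightarrow> b \<in> S \<longrightarrow> a + b \<in> S"
    using prod indicator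
  proof eventually_elim
    case (elim a)
    note indicator_a = elim(2)
    from elim(1) indicator show ?case
    proof eventually_elim
      case (elim b)
      show ?case
      proof (intro impI)
        assume "a \<in> S" "b \<in> S"
        then have "autocorr2 u a b \<noteq> 0"
          using elim indicator_a c \<kappa> by simp
        then show "a + b \<in> S"
          using autocorr2_eq_0_if_autocorr_eq_0[OF u] by (auto simp: S_def)
      qed
    qed
  qed
  ultimately have "emeasure lborel S = 0"
    by (intro emeasure_AE_add_closed_eq_0) measurable
  then show False
    using mass M by simp
qed

lemma gowers2_neq_0:
  assumes "total_mass u \<noteq> 0"
  shows "gowers2 u \<noteq> 0"
proof
  assume "gowers2 u = 0"
  then have "AE a in lborel. autocorr u a = 0"
    by (simp add: gowers2_def nn_integral_0_iff_AE)
  then have "(\<integral>\<^sup>+a. autocorr u a \<partial>lborel) = 0"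
    by (simp add: nn_integral_0_iff_AE)
  with assms show False
    by (simp add: nn_integral_autocorr)
qed

lemma gowers_mixed_sq_eq_if_gowers2_pow4_eq:
  assumes G2: "gowers2 u \<noteq> \<infinity>" and M: "total_mass u \<notin> {0, \<infinity>}"
    and eq: "gowers2 u ^ 4 = (total_mass u ^ 2) ^ 4 * gowers3 u"
  shows "gowers_mixed u ^ 2 = gowers3 u * gowers2 u ^ 2"
proof -
  define K where "K = total_mass u ^ 8 * gowers2 u ^ 2"
  have K: "K \<notin> {0, \<infinity>}"
    using M G2 gowers2_neq_0 by (auto simp: K_def ennreal_mult_eq_top_iff power_eq_top_ennreal)
  have "K * gowers_mixed u ^ 2 = K * (gowers3 u * gowers2 u ^ 2)"
  proof (rule antisym)
    show "K * gowers_mixed u ^ 2 \<le> K * (gowers3 u * gowers2 u ^ 2)"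
      by (intro mult_left_mono gowers_mixed_sq_le) simp
    have "K * (gowers3 u * gowers2 u ^ 2) = gowers2 u ^ 4 * ((total_mass u ^ 2) ^ 4 * gowers3 u)"
      by (simp add: K_def ac_simps flip: power_mult power_add)
    also have "\<dots> = gowers2 u ^ 8"
      unfolding eq[symmetric] by (simp flip: power_add)
    also have "\<dots> \<le> K * gowers_mixed u ^ 2"
      using gowers2_pow8_le by (simp add: K_def)
    finally show "K * (gowers3 u * gowers2 u ^ 2) \<le> K * gowers_mixed u ^ 2" .
  qed
  with K show ?thesis
    by (simp add: ennreal_mult_cancel_left)
qed

lemma gowers2_pow4_less:
  assumes G2: "gowers2 u \<noteq> \<infinity>" and M: "total_mass u \<notin> {0, \<infinity>}" and G3: "gowers3 u \<notin> {0, \<infinity>}"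
  shows "gowers2 u ^ 4 < (total_mass u ^ 2) ^ 4 * gowers3 u"
proof (rule ccontr)
  assume "\<not> ?thesis"
  with gowers2_pow4_le[OF G2] have "gowers2 u ^ 4 = (total_mass u ^ 2) ^ 4 * gowers3 u"
    by simp
  with G2 M have "gowers_mixed u ^ 2 = gowers3 u * gowers2 u ^ 2"
    by (rule gowers_mixed_sq_eq_if_gowers2_pow4_eq)
  then obtain c where c: "c \<notin> {0, \<infinity>}"
    and "AE a in lborel. AE b in lborel. autocorr2 u a b = c * (autocorr u a * autocorr u b)"
    using Cauchy_Schwarz_nn_integral_iterated_eq_imp_AE_proportional[of lborel lborel
        "\<lambda>a b. autocorr2 u a b" "\<lambda>a b. autocorr u a * autocorr u b"] G2 G3 gowers2_neq_0 M
    by (auto simp: lborel.sigma_finite_measure_axioms gowers_mixed_def gowers3_def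
        iterated_autocorr_product_sq power_eq_top_ennreal)
  then show False
    using autocorr2_not_AE_proportional_product[OF M c] by blast
qed

end

section \<open>Finiteness of the second Gowers integral\<close>

lemma gowers2_le_bound_total_mass:
  assumes [measurable]: "v \<in> borel_measurable borel" and bound: "\<And>y. v y \<le> C"
  shows "gowers2 v \<le> C * total_mass v ^ 3"
proof -
  have autocorr_le: "autocorr v a \<le> C * total_mass v" for a
    unfolding autocorr_def total_mass_def
    by (subst nn_integral_cmult[symmetric]) (auto intro!: nn_integral_mono mult_right_mono bound)
  have "gowers2 v \<le> (\<integral>\<^sup>+a. (C * total_mass v) * autocorr v a \<partial>lborel)"
    unfolding gowers2_def power2_eq_square by (intro nn_integral_mono mult_right_mono autocorr_le) simp
  also have "\<dots> = C * total_mass v ^ 3"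
    by (simp add: nn_integral_cmult nn_integral_autocorr power3_eq_cube power2_eq_square ac_simps)
  finally show ?thesis .
qed

definition truncation :: "(real \<Rightarrow> ennreal) \<Rightarrow> nat \<Rightarrow> real \<Rightarrow> ennreal" where
  "truncation u n y = min (u y) (of_nat n) * indicator {- real n .. real n} y"

lemma measurable_truncation[measurable]:
  assumes [measurable]: "u \<in> borel_measurable borel"
  shows "truncation u n \<in> borel_measurable borel"
  unfolding truncation_def[abs_def] by measurable

lemma truncation_le: "truncation u n y \<le> u y"
  unfolding truncation_def by (auto split: split_indicator)

lemma incseq_truncation: "incseq (\<lambda>n. truncation u n y)"
  unfolding truncation_def incseq_def by (intro allI impI mult_mono min.mono) (auto split: split_indicator)

lemma SUP_truncation: "(SUP n. truncation u n y) = u y"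
proof -
  have "(SUP n. min (u y) (of_nat n)) = u y"
    by (simp add: inf_min[symmetric] inf_SUP[symmetric] ennreal_SUP_of_nat_eq_top)
  moreover have "(SUP n. indicator {- real n .. real n} y :: ennreal) = 1"
  proof -
    obtain N where "\<bar>y\<bar> \<le> real N"
      using real_arch_simple by blast
    then have "indicator {- real n .. real n} y = (1 :: ennreal)" if "N \<le> n" for n
      using that by (auto split: split_indicator)
    then show ?thesis
      by (intro antisym SUP_least) (auto intro!: SUP_upper2[of N] split: split_indicator)
  qed
  moreover have "incseq (\<lambda>n. min (u y) (of_nat n))"
    unfolding incseq_def by (intro allI impI min.mono) simp_all
  moreover have "incseq (\<lambda>n. indicator {- real n .. real n} y :: ennreal)"
    by (auto simp: incseq_def split: split_indicator)
  ultimately show ?thesis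
    unfolding truncation_def by (simp add: SUP_mult_incseq_ennreal)
qed

lemma total_mass_truncation_finite: "total_mass (truncation u n) \<noteq> \<infinity>"
proof -
  have "total_mass (truncation u n) \<le> (\<integral>\<^sup>+y. of_nat n * indicator {- real n .. real n} y \<partial>lborel)"
    unfolding total_mass_def truncation_def by (intro nn_integral_mono mult_right_mono) auto
  also have "\<dots> < \<infinity>"
    by (simp add: nn_integral_cmult ennreal_mult_less_top of_nat_less_top)
  finally show ?thesis
    by simp
qed

lemma SUP_gowers2_truncation:
  assumes [measurable]: "u \<in> borel_measurable borel"
  shows "(SUP n. gowers2 (truncation u n)) = gowers2 u"
proof -
  have incseq_autocorr: "incseq (\<lambda>n. autocorr (truncation u n) a)" for a
    unfolding autocorr_def incseq_def
    by (intro allI impI nn_integral_mono mult_mono) (auto intro: incseq_truncation[THEN incseqD])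
  have SUP_autocorr: "(SUP n. autocorr (truncation u n) a) = autocorr u a" for a
  proof -
    have "(SUP n. autocorr (truncation u n) a)
        = (\<integral>\<^sup>+y. (SUP n. truncation u n (y + a) * truncation u n y) \<partial>lborel)"
      unfolding autocorr_def
      by (rule nn_integral_monotone_convergence_SUP[symmetric])
        (auto simp: incseq_def le_fun_def intro!: mult_mono incseq_truncation[THEN incseqD])
    also have "\<dots> = autocorr u a"
      by (simp add: SUP_mult_incseq_ennreal incseq_truncation SUP_truncation autocorr_def)
    finally show ?thesis .
  qed
  have "(SUP n. gowers2 (truncation u n)) = (\<integral>\<^sup>+a. (SUP n. autocorr (truncation u n) a ^ 2) \<partial>lborel)"
    unfolding gowers2_def
    by (rule nn_integral_monotone_convergence_SUP[symmetric])
      (auto simp: incseq_def le_fun_def intro!: power_mono incseq_autocorr[THEN incseqD])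
  also have "\<dots> = gowers2 u"
    by (simp add: power2_eq_square SUP_mult_incseq_ennreal incseq_autocorr SUP_autocorr gowers2_def)
  finally show ?thesis .
qed

lemma gowers2_finite:
  assumes [measurable]: "u \<in> borel_measurable borel"
    and M: "total_mass u \<noteq> \<infinity>" and G3: "gowers3 u \<noteq> \<infinity>"
  shows "gowers2 u \<noteq> \<infinity>"
proof -
  define B where "B = (total_mass u ^ 2) ^ 4 * gowers3 u"
  have "gowers2 (truncation u n) \<le> max 1 B" for n
  proof -
    let ?G = "gowers2 (truncation u n)"
    have "?G \<le> of_nat n * total_mass (truncation u n) ^ 3"
      by (rule gowers2_le_bound_total_mass) (auto simp: truncation_def split: split_indicator)
    moreover have "of_nat n * total_mass (truncation u n) ^ 3 < \<infinity>"
      using total_mass_truncation_finite[of u n]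
      by (simp add: ennreal_mult_less_top of_nat_less_top less_top power_less_top_ennreal)
    ultimately have "?G \<noteq> \<infinity>"
      by (auto simp: less_top intro: order.strict_trans1)
    with measurable_truncation[OF assms(1)]
    have "?G ^ 4 \<le> (total_mass (truncation u n) ^ 2) ^ 4 * gowers3 (truncation u n)"
      by (rule gowers2_pow4_le)
    also have "\<dots> \<le> B"
      unfolding B_def total_mass_def gowers3_def autocorr2_def autocorr_def
      by (intro mult_mono power_mono nn_integral_mono truncation_le) auto
    finally have "?G ^ 4 \<le> B" .
    moreover have "?G \<le> max 1 (?G ^ 4)"
      by (cases "?G \<le> 1") (auto simp: le_max_iff_disj intro: order.trans[OF _ power_increasing[of 1 4]])
    ultimately show ?thesis
      by (meson max.mono order_refl order_trans)
  qed
  then have "gowers2 u \<le> max 1 B"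
    by (subst SUP_gowers2_truncation[symmetric]) (auto intro: SUP_least)
  moreover have "B \<noteq> \<infinity>"
    using M G3 by (simp add: B_def ennreal_mult_eq_top_iff power_eq_top_ennreal)
  ultimately show ?thesis
    by (auto simp: top_unique max_def split: if_splits)
qed

section \<open>Gowers integrals of a Lebesgue measurable function\<close>

fun iter_AE :: "nat \<Rightarrow> (real list \<Rightarrow> bool) \<Rightarrow> bool" where
  "iter_AE 0 P = P []"
| "iter_AE (Suc d) P = (AE h in lborel. iter_AE d (\<lambda>hs. P (h # hs)))"

lemma iter_AE_mono2:
  assumes "iter_AE d P" "iter_AE d Q" "\<And>hs. P hs \<Longrightarrow> Q hs \<Longrightarrow> R hs"
  shows "iter_AE d R"
  using assms
proof (induction d arbitrary: P Q R)
  case (Suc d)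
  have "AE h in lborel. iter_AE d (\<lambda>hs. P (h # hs))" "AE h in lborel. iter_AE d (\<lambda>hs. Q (h # hs))"
    using Suc.prems(1,2) by simp_all
  then have "AE h in lborel. iter_AE d (\<lambda>hs. R (h # hs))"
  proof eventually_elim
    case (elim h)
    show ?case
      by (rule Suc.IH[OF elim]) (rule Suc.prems(3))
  qed
  then show ?case
    by simp
qed simp

lemma iter_AE_mono:
  assumes "iter_AE d P" "\<And>hs. P hs \<Longrightarrow> Q hs"
  shows "iter_AE d Q"
  using assms(1,1) by (rule iter_AE_mono2) (rule assms(2))

lemma iter_int_cong_iter_AE:
  "iter_AE d (\<lambda>hs. F hs = G hs) \<Longrightarrow> iter_int d F = iter_int d G"
proof (induction d arbitrary: F G)
  case (Suc d)
  then have "AE h in lebesgue. iter_int d (\<lambda>hs. F (h # hs)) = iter_int d (\<lambda>hs. G (h # hs))"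
    by (auto intro: AE_completion elim: AE_mp)
  then show ?case
    by (simp add: nn_integral_cong_AE)
qed simp

lemma AE_iter_AE_gowers_diff_eq:
  assumes "AE x in lborel. f x = g x"
  shows "AE x in lborel. iter_AE d (\<lambda>hs. gowers_diff f hs x = gowers_diff g hs x)"
proof (induction d)
  case 0
  with assms show ?case
    by simp
next
  case (Suc d)
  then show ?case
  proof eventually_elim
    case (elim x)
    note eq_x = elim
    have "AE h in lborel. iter_AE d (\<lambda>hs. gowers_diff f hs (x + h) = gowers_diff g hs (x + h))"
      using AE_lborel_translate[OF Suc.IH] .
    then have "AE h in lborel. iter_AE d (\<lambda>hs. gowers_diff f hs (x + h) * gowers_diff f hs x
        = gowers_diff g hs (x + h) * gowers_diff g hs x)"
    proof eventually_elim
      case (elim h)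
      from elim eq_x show ?case
        by (rule iter_AE_mono2) simp
    qed
    then show ?case
      by simp
  qed
qed

lemma gowers_int_cong_AE:
  assumes "AE x in lborel. f x = g x"
  shows "gowers_int f d = gowers_int g d"
proof -
  have "AE x in lborel. iter_int d (\<lambda>hs. ennreal (gowers_diff f hs x))
      = iter_int d (\<lambda>hs. ennreal (gowers_diff g hs x))"
    using AE_iter_AE_gowers_diff_eq[OF assms, of d]
  proof eventually_elim
    case (elim x)
    then have "iter_AE d (\<lambda>hs. ennreal (gowers_diff f hs x) = ennreal (gowers_diff g hs x))"
      by (rule iter_AE_mono) simp
    then show ?case
      by (rule iter_int_cong_iter_AE)
  qed
  then show ?thesis
    unfolding gowers_int_def by (intro nn_integral_cong_AE AE_completion)
qed

context
  fixes h :: "real \<Rightarrow> real"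
  assumes h[measurable]: "h \<in> borel_measurable borel" and h_nonneg: "\<And>x. 0 \<le> h x"
begin

lemma gowers_int_1_eq: "gowers_int h 1 = total_mass (\<lambda>x. ennreal (h x)) ^ 2"
  using iterated_gowers1[of "\<lambda>x. ennreal (h x)"]
  by (simp add: gowers_int_def nn_integral_completion ennreal_mult h_nonneg)

lemma gowers_int_2_eq: "gowers_int h 2 = gowers2 (\<lambda>x. ennreal (h x))"
  using iterated_gowers2[of "\<lambda>x. ennreal (h x)"]
  by (simp add: gowers_int_def nn_integral_completion numeral_eq_Suc ennreal_mult h_nonneg)

lemma gowers_int_3_eq: "gowers_int h 3 = gowers3 (\<lambda>x. ennreal (h x))"
  using iterated_gowers3[of "\<lambda>x. ennreal (h x)"]
  by (simp add: gowers_int_def nn_integral_completion numeral_eq_Suc ennreal_mult h_nonneg)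

end

lemma gowers_norm_2_less:
  assumes G1: "gowers_int f 1 \<notin> {0, \<infinity>}" and G3: "gowers_int f 3 \<notin> {0, \<infinity>}"
    and G2: "gowers_int f 2 \<noteq> \<infinity>"
    and less: "gowers_int f 2 ^ 4 < gowers_int f 1 ^ 4 * gowers_int f 3"
  shows "gowers_norm f 2 < gowers_norm f 1 powr (1/2) * gowers_norm f 3 powr (1/2)"
proof -
  obtain g1 where g1: "gowers_int f 1 = ennreal g1" "g1 > 0"
    using G1 by (cases "gowers_int f 1") auto
  obtain g3 where g3: "gowers_int f 3 = ennreal g3" "g3 > 0"
    using G3 by (cases "gowers_int f 3") auto
  obtain g2 where g2: "gowers_int f 2 = ennreal g2" "g2 \<ge> 0"
    using G2 by (cases "gowers_int f 2") auto
  have "g2 ^ 4 < g1 ^ 4 * g3"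
    using less g1 g2 g3 by (simp add: ennreal_power ennreal_mult[symmetric] ennreal_less_iff)
  then have "(g2 ^ 4) powr (1/16) < (g1 ^ 4) powr (1/16) * g3 powr (1/16)"
    using g1 g2 g3 by (subst powr_mult[symmetric]) (auto intro: powr_less_mono2)
  moreover have "(x ^ 4) powr (1/16) = x powr (1/4)" if "0 \<le> x" for x :: real
  proof (cases "x = 0")
    case False
    with that have "x ^ 4 = x powr 4"
      by (simp add: powr_numeral)
    then show ?thesis
      by (simp add: powr_powr)
  qed simp
  ultimately have "g2 powr (1/4) < g1 powr (1/4) * g3 powr (1/16)"
    using g1 g2 by simp
  then show ?thesis
    using g1 g2 g3 by (simp add: gowers_norm_def powr_powr)
qed

lemma lebesgue_measurable_nonneg_AE_eq_borel:
  fixes f :: "real \<Rightarrow> real"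
  assumes "f \<in> borel_measurable lebesgue" "\<And>x. 0 \<le> f x"
  obtains h where "h \<in> borel_measurable borel" "\<And>x. 0 \<le> h x" "AE x in lborel. f x = h x"
proof -
  obtain g where [measurable]: "g \<in> borel_measurable borel" and f_eq_g: "AE x in lborel. f x = g x"
    using completion_ex_borel_measurable_real[OF assms(1)] by auto
  from f_eq_g have "AE x in lborel. f x = max 0 (g x)"
    by eventually_elim (metis assms(2) max.absorb2)
  then show ?thesis
    by (intro that[of "\<lambda>x. max 0 (g x)"]) simp_all
qed

theorem proposition2p5:
  fixes f :: "real \<Rightarrow> real"
  assumes "f \<in> borel_measurable lebesgue"
    and "\<And>x. f x \<ge> 0"
    and "0 < gowers_int f 1" and "gowers_int f 1 < \<infinity>"
    and "0 < gowers_int f 3" and "gowers_int f 3 < \<infinity>"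
  shows "gowers_int f 2 < \<infinity> \<and>
         gowers_norm f 2 < gowers_norm f 1 powr (1/2) * gowers_norm f 3 powr (1/2)"
proof -
  obtain h where h[measurable]: "h \<in> borel_measurable borel" and h_nonneg: "\<And>x. 0 \<le> h x"
    and f_eq_h_AE: "AE x in lborel. f x = h x"
    using lebesgue_measurable_nonneg_AE_eq_borel[OF assms(1,2)] by blast
  from f_eq_h_AE have f_eq_h: "gowers_int f d = gowers_int h d" for d
    by (rule gowers_int_cong_AE)
  define u where "u = (\<lambda>x. ennreal (h x))"
  have u[measurable]: "u \<in> borel_measurable borel"
    unfolding u_def by measurable
  have G1: "gowers_int f 1 = total_mass u ^ 2" and G2: "gowers_int f 2 = gowers2 u"
    and G3: "gowers_int f 3 = gowers3 u"
    unfolding f_eq_h u_def using h h_nonneg by (rule gowers_int_1_eq gowers_int_2_eq gowers_int_3_eq)+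
  have M: "total_mass u \<notin> {0, \<infinity>}" and G3_pos_fin: "gowers3 u \<notin> {0, \<infinity>}"
    using assms(3-6) unfolding G1 G3 by (auto simp: power_eq_top_ennreal)
  then have G2_fin: "gowers2 u \<noteq> \<infinity>"
    by (intro gowers2_finite[OF u]) auto
  then have "gowers2 u ^ 4 < (total_mass u ^ 2) ^ 4 * gowers3 u"
    using M G3_pos_fin by (rule gowers2_pow4_less[OF u])
  then show ?thesis
    using gowers_norm_2_less[of f] M G3_pos_fin G2_fin
    unfolding G1 G2 G3 by (auto simp: less_top power_eq_top_ennreal)
qed

end
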